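(* For any $\mathbf A\in\mathbb R^{m\times n}$, $k\in\{1,\dots,n\}$ and $\alpha>0$, if $S\sim\mathrm{DPP}(\frac1\alpha\mathbf A^\top\mathbf A)$ and $S'\sim k\text{-}\mathrm{DPP}(\mathbf A^\top\mathbf A)$, then \[ \mathbb E[\mathrm{Er}_{\mathbf A}(S')]\le\mathbb E[\mathrm{Er}_{\mathbf A}(S)\mid|S|\le k]. \]
   Context: For $\mathbf A\in\mathbb R^{m\times n}$ with columns $\mathbf a_1,\dots,\mathbf a_n$ and $S\subseteq\{1,\dots,n\}$, $\mathbf P_S$ is the orthogonal projection onto $\mathrm{span}\{\mathbf a_i:i\in S\}$ and $\mathrm{Er}_{\mathbf A}(S)=\|\mathbf A-\mathbf P_S\mathbf A\|_F^2$. For a p.s.d. $n\times n$ matrix $\mathbf K$, $S\sim\mathrm{DPP}(\mathbf K)$ is the distribution over all subsets $S\subseteq\{1,\dots,n\}$ with $\Pr(S)=\det(\mathbf K_{S,S})/\det(\mathbf I+\mathbf K)$ ($\mathbf K_{S,S}$ the principal submatrix indexed by $S$, empty determinant $=1$), and $k\text{-}\mathrm{DPP}(\mathbf K)$ is its restriction to subsets of size exactly $k$, i.e., $\Pr(S)\propto\det(\mathbf K_{S,S})$ over $|S|=k$. *)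

theory Defs
  imports "HOL-Analysis.Analysis"
begin

(* Orthogonal projection onto span{a_i : i in S} applied to a vector v
   (for a subspace, the closest point is the orthogonal projection). *)
definition col_proj :: "real^'n^'m \<Rightarrow> 'n set \<Rightarrow> real^'m \<Rightarrow> real^'m" where
  "col_proj A S v = closest_point (span {column i A | i. i \<in> S}) v"

definition proj_mat :: "real^'n^'m \<Rightarrow> 'n set \<Rightarrow> real^'n^'m" where
  "proj_mat A S = (\<chi> r c. col_proj A S (column c A) $ r)"

definition frob_sq :: "real^'n^'m \<Rightarrow> real" where
  "frob_sq M = (\<Sum>r\<in>UNIV. \<Sum>c\<in>UNIV. (M $ r $ c)\<^sup>2)"

definition Er :: "real^'n^'m \<Rightarrow> 'n set \<Rightarrow> real" where
  "Er A S = frob_sq (A - proj_mat A S)"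

(* determinant of the principal submatrix K_{S,S} (Leibniz formula over S);
   equals 1 for S = {} *)
definition pdet :: "real^'n^'n \<Rightarrow> 'n set \<Rightarrow> real" where
  "pdet K S = (\<Sum>p\<in>{p. p permutes S}. of_int (sign p) * (\<Prod>i\<in>S. K $ i $ p i))"

definition dpp_prob :: "real^'n^'n \<Rightarrow> 'n set \<Rightarrow> real" where
  "dpp_prob K S = pdet K S / det (mat 1 + K)"

definition kdpp_prob :: "nat \<Rightarrow> real^'n^'n \<Rightarrow> 'n set \<Rightarrow> real" where
  "kdpp_prob k K S = (if card S = k then pdet K S / (\<Sum>T\<in>{T. card T = k}. pdet K T) else 0)"

definition kdpp_expect :: "nat \<Rightarrow> real^'n^'n \<Rightarrow> ('n set \<Rightarrow> real) \<Rightarrow> real" where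
  "kdpp_expect k K f = (\<Sum>S\<in>{S. card S = k}. kdpp_prob k K S * f S)"

definition dpp_cond_expect_le :: "nat \<Rightarrow> real^'n^'n \<Rightarrow> ('n set \<Rightarrow> real) \<Rightarrow> real" where
  "dpp_cond_expect_le k K f =
     (\<Sum>S\<in>{S. card S \<le> k}. dpp_prob K S * f S) / (\<Sum>S\<in>{S. card S \<le> k}. dpp_prob K S)"

end

(*
  Write e_j for the sum of the j x j principal minors of K = A^T A. Adjoining a column multiplies a
  Gram determinant by the squared distance of that column from the span of the others, and this gives
  sum_{|S| = j} det K_SS * Er_A(S) = (j + 1) e_{j+1}. Hence the k-DPP expectation is the ratio
  (k + 1) e_{k+1} / e_k, whereas the conditional DPP expectation is the mean of the ratios
  (j + 1) e_{j+1} / e_j for j <= k, weighted by alpha^-j e_j. The e_j are the elementary symmetric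
  polynomials of the nonnegative eigenvalues of K, so by Newton's inequalities these ratios do not
  increase with j, and the last one is the smallest.
*)
theory Submission
  imports Defs
begin

lemma sum_card_le_group:
  fixes f :: "nat \<Rightarrow> 'b::semiring_0" and g :: "'a::finite set \<Rightarrow> 'b"
  shows "(\<Sum>S | card S \<le> k. f (card S) * g S) = (\<Sum>j\<le>k. f j * (\<Sum>S | card S = j. g S))"
proof -
  have "(\<Sum>S | card S \<le> k. f (card S) * g S)
      = (\<Sum>j\<le>k. \<Sum>S\<in>{S\<in>{S. card S \<le> k}. card S = j}. f (card S) * g S)"
    by (rule sum.group[symmetric]) auto
  also have "\<dots> = (\<Sum>j\<le>k. f j * (\<Sum>S | card S = j. g S))"
    by (intro sum.cong refl) (auto simp: sum_distrib_left intro: sum.cong)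
  finally show ?thesis .
qed

lemma sum_card_insert:
  fixes h :: "'a::finite set \<Rightarrow> 'b::semiring_1"
  shows "(\<Sum>S | card S = j. \<Sum>c\<in>UNIV - S. h (insert c S)) = of_nat (Suc j) * (\<Sum>T | card T = Suc j. h T)"
proof -
  have "(\<Sum>S | card S = j. \<Sum>c\<in>UNIV - S. h (insert c S))
      = (\<Sum>(S, c)\<in>Sigma {S. card S = j} (\<lambda>S. UNIV - S). h (insert c S))"
    by (rule sum.Sigma) auto
  also have "\<dots> = (\<Sum>(T, c)\<in>Sigma {T. card T = Suc j} (\<lambda>T. T). h T)"
    by (rule sum.reindex_bij_witness[where j = "\<lambda>(S, c). (insert c S, c)"
          and i = "\<lambda>(T, c). (T - {c}, c)"]) auto
  also have "\<dots> = (\<Sum>T | card T = Suc j. \<Sum>c\<in>T. h T)"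
    by (rule sum.Sigma[symmetric]) auto
  also have "\<dots> = of_nat (Suc j) * (\<Sum>T | card T = Suc j. h T)"
    by (simp add: sum_distrib_left)
  finally show ?thesis .
qed

section \<open>Principal minors\<close>

lemma sum_permutations_UNIV_restrict:
  fixes g :: "('a::finite \<Rightarrow> 'a) \<Rightarrow> 'b::comm_monoid_add"
  assumes "\<And>p x. p permutes UNIV \<Longrightarrow> x \<notin> T \<Longrightarrow> p x \<noteq> x \<Longrightarrow> g p = 0"
  shows "(\<Sum>p | p permutes UNIV. g p) = (\<Sum>p | p permutes T. g p)"
proof (rule sum.mono_neutral_right)
  show "finite {p. p permutes (UNIV::'a set)}"
    by (simp add: finite_permutations)
  show "{p. p permutes T} \<subseteq> {p. p permutes UNIV}"
    using permutes_subset by blast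
  show "\<forall>p\<in>{p. p permutes UNIV} - {p. p permutes T}. g p = 0"
    using assms unfolding permutes_def by blast
qed

definition pad_principal :: "real^'n^'n \<Rightarrow> 'n set \<Rightarrow> real^'n^'n" where
  "pad_principal K T = (\<chi> a b. if a \<in> T \<and> b \<in> T then K $ a $ b else if a = b then 1 else 0)"

lemma det_pad_principal: "det (pad_principal K T) = pdet K T"
proof -
  have "det (pad_principal K T)
      = (\<Sum>p | p permutes T. of_int (sign p) * (\<Prod>i\<in>UNIV. pad_principal K T $ i $ p i))"
    unfolding det_def
    by (rule sum_permutations_UNIV_restrict) (auto simp: pad_principal_def intro!: prod_zero)
  also have "\<dots> = pdet K T"
    unfolding pdet_def
  proof (intro sum.cong refl)
    fix p assume "p \<in> {p. p permutes T}"
    then have "(\<Prod>i\<in>UNIV. pad_principal K T $ i $ p i) = (\<Prod>i\<in>T. K $ i $ p i)"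
      by (intro prod.mono_neutral_cong_right)
        (auto simp: pad_principal_def permutes_not_in permutes_in_image)
    then show "of_int (sign p) * (\<Prod>i\<in>UNIV. pad_principal K T $ i $ p i)
             = of_int (sign p) * (\<Prod>i\<in>T. K $ i $ p i)" by simp
  qed
  finally show ?thesis .
qed

lemma det_identity_add: "det (mat 1 + K) = (\<Sum>T\<in>UNIV. pdet K T)"
proof -
  let ?d = "\<lambda>i j. if i = j then 1 else 0 :: real"
  let ?t = "\<lambda>B p. of_int (sign p) * ((\<Prod>i\<in>B. K $ i $ p i) * (\<Prod>i\<in>UNIV - B. ?d i (p i)))"
  have "det (mat 1 + K) = (\<Sum>p | p permutes UNIV. of_int (sign p) * (\<Prod>i\<in>UNIV. K $ i $ p i + ?d i (p i)))"
    unfolding det_def by (simp add: mat_def add.commute)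
  also have "\<dots> = (\<Sum>p | p permutes UNIV. \<Sum>B\<in>UNIV. ?t B p)"
    by (simp add: prod_add sum_distrib_left)
  also have "\<dots> = (\<Sum>B\<in>UNIV. \<Sum>p | p permutes UNIV. ?t B p)"
    by (rule sum.swap)
  also have "\<dots> = (\<Sum>B\<in>UNIV. \<Sum>p | p permutes B. ?t B p)"
    by (intro sum.cong refl sum_permutations_UNIV_restrict) (auto intro!: prod_zero)
  also have "\<dots> = (\<Sum>B\<in>UNIV. pdet K B)"
    unfolding pdet_def
    by (intro sum.cong refl) (auto simp: permutes_not_in intro!: prod.neutral)
  finally show ?thesis .
qed

lemma pdet_scaleR: "pdet (c *\<^sub>R K) T = c ^ card T * pdet K T"
  unfolding pdet_def by (simp add: sum_distrib_left prod.distrib mult.left_commute)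

lemma pdet_empty: "pdet K {} = 1"
  unfolding pdet_def by simp

definition principal_minor_sum :: "real^'n^'n \<Rightarrow> nat \<Rightarrow> real" where
  "principal_minor_sum K j = (\<Sum>T | card T = j. pdet K T)"

lemma det_identity_add_scaleR:
  fixes K :: "real^'n^'n"
  shows "det (mat 1 + t *\<^sub>R K) = (\<Sum>j\<le>CARD('n). t ^ j * principal_minor_sum K j)"
proof -
  have "{T::'n set. card T \<le> CARD('n)} = UNIV"
    by (auto intro: card_mono)
  then show ?thesis
    using sum_card_le_group[of "\<lambda>j. t ^ j" "pdet K" "CARD('n)"]
    by (simp add: det_identity_add pdet_scaleR principal_minor_sum_def)
qed

section \<open>Gram determinants and projection residuals\<close>

lemma closest_point_span:
  fixes v :: "'a::euclidean_space"
  shows "closest_point (span X) v \<in> span X"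
    and "w \<in> span X \<Longrightarrow> (v - closest_point (span X) v) \<bullet> w = 0"
proof -
  obtain y z where y: "y \<in> span X" and z: "\<And>w. w \<in> span X \<Longrightarrow> orthogonal z w"
    and v: "v = y + z"
    using orthogonal_subspace_decomp_exists by metis
  have "dist v y \<le> dist v w" if "w \<in> span X" for w
  proof -
    have "(dist v w)\<^sup>2 = (norm (z + (y - w)))\<^sup>2"
      by (simp add: v dist_norm algebra_simps)
    also have "\<dots> = (norm z)\<^sup>2 + (norm (y - w))\<^sup>2"
      using y that by (intro norm_add_Pythagorean z span_diff)
    finally have "(dist v y)\<^sup>2 \<le> (dist v w)\<^sup>2"
      by (simp add: v dist_norm)
    then show ?thesis
      by (simp add: power2_le_iff_abs_le)
  qed
  then have "y = closest_point (span X) v"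
    using y by (intro closest_point_unique) (auto simp: subspace_imp_convex closed_subspace)
  then show "closest_point (span X) v \<in> span X"
    and "w \<in> span X \<Longrightarrow> (v - closest_point (span X) v) \<bullet> w = 0"
    using y z v by (auto simp: orthogonal_def)
qed

lemma det_row_axis_clear_column:
  fixes M :: "'a::comm_ring_1^'n^'n"
  assumes row: "row i M = axis i 1"
  shows "det M = det (\<chi> a b. if b = i then axis i 1 $ a else M $ a $ b)"
    (is "_ = det ?N")
  unfolding det_def
proof (intro sum.cong refl)
  fix p assume "p \<in> {p. p permutes (UNIV::'n set)}"
  then have inj: "inj p"
    by (simp add: permutes_inj)
  have Mi: "M $ i $ b = (if b = i then 1 else 0)" for b
    using row by (simp add: row_def axis_def vec_eq_iff)
  show "of_int (sign p) * (\<Prod>k\<in>UNIV. M $ k $ p k) = of_int (sign p) * (\<Prod>k\<in>UNIV. ?N $ k $ p k)"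
  proof (cases "p i = i")
    case True
    then have "p k \<noteq> i" if "k \<noteq> i" for k
      using inj that by (metis injD)
    then have "?N $ k $ p k = M $ k $ p k" for k
      using True by (cases "k = i") (simp_all add: Mi axis_def)
    then show ?thesis
      by simp
  next
    case False
    then have M0: "M $ i $ p i = 0" and N0: "?N $ i $ p i = 0"
      by (simp_all add: Mi axis_def)
    have "(\<Prod>k\<in>UNIV. M $ k $ p k) = 0" "(\<Prod>k\<in>UNIV. ?N $ k $ p k) = 0"
      by (rule prod_zero[OF finite bexI[where x = i]], fact, rule UNIV_I)+
    then show ?thesis
      by (simp only:)
  qed
qed

lemma det_axis_row_pad_principal:
  assumes "i \<notin> S"
  shows "det (\<chi> k. if k = i then axis i 1 else row k (pad_principal K (insert i S))) = pdet K S"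
    (is "det ?M = _")
proof -
  have "row i ?M = axis i 1"
    by (simp add: row_def vec_eq_iff)
  moreover have "(\<chi> a b. if b = i then axis i 1 $ a else ?M $ a $ b) = pad_principal K S"
    using assms by (auto simp: vec_eq_iff pad_principal_def axis_def row_def)
  ultimately show ?thesis
    using det_row_axis_clear_column[of i ?M] by (simp add: det_pad_principal)
qed

text \<open>Row \<open>j\<close> of the padded Gram matrix is \<open>g a\<^sub>j\<close> for a linear map \<open>g\<close>. Subtracting from row \<open>i\<close>
  the combination of the other rows that represents \<open>g (P\<^sub>S a\<^sub>i)\<close> leaves \<open>g r\<close> for the residual
  \<open>r = a\<^sub>i - P\<^sub>S a\<^sub>i\<close>, which is \<open>\<parallel>r\<parallel>\<^sup>2\<close> times a unit row because \<open>r\<close> is orthogonal to all \<open>a\<^sub>j\<close>, \<open>j \<in> S\<close>.\<close>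
lemma pdet_gram_insert:
  fixes A :: "real^'n^'m"
  assumes iS: "i \<notin> S"
  shows "pdet (transpose A ** A) (insert i S)
       = (norm (column i A - col_proj A S (column i A)))\<^sup>2 * pdet (transpose A ** A) S"
proof -
  define X where "X = {column j A | j. j \<in> S}"
  define p where "p = col_proj A S (column i A)"
  define r where "r = column i A - p"
  define R where "R = pad_principal (transpose A ** A) (insert i S)"
  have pX: "p \<in> span X" and r_orth: "\<And>w. w \<in> span X \<Longrightarrow> r \<bullet> w = 0"
    using closest_point_span[where X = X and v = "column i A"]
    unfolding p_def r_def col_proj_def X_def by auto
  define g :: "real^'m \<Rightarrow> real^'n"
    where "g u = (\<chi> b. if b \<in> insert i S then u \<bullet> column b A else 0)" for u
  have g_linear: "linear g"
    by (rule linearI) (simp_all add: g_def vec_eq_iff inner_add_left)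
  have row_R: "row j R = g (column j A)" if "j \<in> insert i S" for j
    using that
    by (auto simp: row_def R_def pad_principal_def g_def matrix_mult_transpose_dot_column vec_eq_iff)
  have "g ` X \<subseteq> {row j R | j. j \<noteq> i}"
    using row_R iS unfolding X_def by force
  then have "g p \<in> span {row j R | j. j \<noteq> i}"
    using pX span_linear_image[OF g_linear, of X] span_mono by blast
  then have "det R = det (\<chi> k. if k = i then row i R + - g p else row k R)"
    by (intro det_row_span[symmetric]) (simp add: span_vec_eq span_neg)
  also have "row i R + - g p = (r \<bullet> r) *s axis i 1"
  proof -
    have "g r $ b = ((r \<bullet> r) *s axis i 1) $ b" for b
    proof -
      have "r \<bullet> column i A = r \<bullet> r"
        using r_orth[OF pX] by (simp add: r_def inner_diff_right)
      moreover have "r \<bullet> column b A = 0" if "b \<in> S"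
        using that r_orth by (auto simp: X_def intro: span_base)
      ultimately show ?thesis
        by (auto simp: g_def axis_def)
    qed
    then show ?thesis
      using row_R[of i] g_linear by (simp add: r_def linear_diff vec_eq_iff)
  qed
  also have "det (\<chi> k. if k = i then (r \<bullet> r) *s axis i 1 else row k R)
      = (r \<bullet> r) * det (\<chi> k. if k = i then axis i 1 else row k R)"
    by (rule det_row_mul)
  also have "det (\<chi> k. if k = i then axis i 1 else row k R) = pdet (transpose A ** A) S"
    unfolding R_def by (rule det_axis_row_pad_principal[OF iS])
  finally show ?thesis
    by (simp add: R_def det_pad_principal r_def p_def power2_norm_eq_inner)
qed

lemma Er_eq_sum_column_dist:
  "Er A S = (\<Sum>c\<in>UNIV. (norm (column c A - col_proj A S (column c A)))\<^sup>2)"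
proof -
  have "Er A S = (\<Sum>r\<in>UNIV. \<Sum>c\<in>UNIV. ((column c A - col_proj A S (column c A)) $ r)\<^sup>2)"
    unfolding Er_def frob_sq_def proj_mat_def by (simp add: column_def)
  also have "\<dots> = (\<Sum>c\<in>UNIV. \<Sum>r\<in>UNIV. ((column c A - col_proj A S (column c A)) $ r)\<^sup>2)"
    by (rule sum.swap)
  finally show ?thesis
    by (simp only: power2_norm_eq_inner inner_vec_def) (simp add: power2_eq_square)
qed

lemma col_proj_column_mem:
  assumes "c \<in> S"
  shows "col_proj A S (column c A) = column c A"
  unfolding col_proj_def using assms by (auto intro: closest_point_self span_base)

text \<open>By \<open>pdet_gram_insert\<close>, \<open>det K\<^sub>S\<^sub>S * Er A S\<close> is the sum of \<open>det K\<^sub>T\<^sub>T\<close> over \<open>T = S \<union> {c}\<close>, \<open>c \<notin> S\<close>,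
  and each \<open>T\<close> of size \<open>j + 1\<close> arises from \<open>j + 1\<close> pairs \<open>(S, c)\<close>.\<close>
lemma sum_pdet_gram_Er:
  fixes A :: "real^'n^'m"
  shows "(\<Sum>S | card S = j. pdet (transpose A ** A) S * Er A S)
       = real (Suc j) * principal_minor_sum (transpose A ** A) (Suc j)"
proof -
  let ?K = "transpose A ** A"
  have "pdet ?K S * Er A S = (\<Sum>c\<in>UNIV - S. pdet ?K (insert c S))" for S
  proof -
    have "pdet ?K S * Er A S
        = (\<Sum>c\<in>UNIV. pdet ?K S * (norm (column c A - col_proj A S (column c A)))\<^sup>2)"
      by (simp add: Er_eq_sum_column_dist sum_distrib_left)
    also have "\<dots> = (\<Sum>c\<in>UNIV - S. pdet ?K S * (norm (column c A - col_proj A S (column c A)))\<^sup>2)"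
      by (rule sum.mono_neutral_right) (auto simp: col_proj_column_mem)
    also have "\<dots> = (\<Sum>c\<in>UNIV - S. pdet ?K (insert c S))"
      by (intro sum.cong refl) (simp add: pdet_gram_insert)
    finally show ?thesis .
  qed
  then show ?thesis
    using sum_card_insert[of "pdet ?K" j] by (simp add: principal_minor_sum_def)
qed

section \<open>Ultra log-concave sequences\<close>

text \<open>Equivalently, \<open>i! * a i\<close> is a log-concave sequence whose support is an initial segment.\<close>
definition ultra_log_concave :: "(nat \<Rightarrow> real) \<Rightarrow> bool" where
  "ultra_log_concave a \<longleftrightarrow> (\<forall>i. 0 \<le> a i) \<and> (\<forall>i. a i = 0 \<longrightarrow> a (Suc i) = 0) \<and>
     (\<forall>i. real (i + 2) * a i * a (i + 2) \<le> real (i + 1) * (a (i + 1))\<^sup>2)"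

lemma newton_ineq_weaken:
  fixes M x0 x1 x2 :: real
  assumes "0 \<le> M" "0 \<le> x0" "0 \<le> x2" "(M + 2) * x0 * x2 \<le> (M + 1) * x1\<^sup>2"
  shows "(M + 3) * x0 * x2 \<le> (M + 2) * x1\<^sup>2"
proof -
  have "(M + 1) * ((M + 3) * x0 * x2) = (M + 2) * ((M + 2) * x0 * x2) - x0 * x2"
    by (simp add: algebra_simps)
  also have "\<dots> \<le> (M + 2) * ((M + 2) * x0 * x2)"
    using assms(2,3) by simp
  also have "\<dots> \<le> (M + 2) * ((M + 1) * x1\<^sup>2)"
    using assms(1,4) by (intro mult_left_mono) auto
  also have "\<dots> = (M + 1) * ((M + 2) * x1\<^sup>2)"
    by (simp add: algebra_simps)
  finally show ?thesis
    using assms(1) by (simp add: mult_le_cancel_left_pos)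
qed

lemma newton_ineq_chain:
  fixes M x0 x1 x2 x3 :: real
  assumes "0 \<le> M" "0 \<le> x0" "0 \<le> x1" "0 \<le> x2" "0 \<le> x3"
    and H0: "(M + 2) * x0 * x2 \<le> (M + 1) * x1\<^sup>2" and H1: "(M + 3) * x1 * x3 \<le> (M + 2) * x2\<^sup>2"
    and "x1 = 0 \<Longrightarrow> x2 = 0" "x2 = 0 \<Longrightarrow> x3 = 0"
  shows "(M + 3) * x0 * x3 \<le> (M + 1) * x1 * x2"
proof (cases "x2 = 0")
  case False
  then have pos: "0 < (M + 2) * (x1 * x2)"
    using assms by (auto simp: less_le)
  have "((M + 2) * x0 * x2) * ((M + 3) * x1 * x3) \<le> ((M + 1) * x1\<^sup>2) * ((M + 2) * x2\<^sup>2)"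
    by (rule mult_mono[OF H0 H1]) (use assms in auto)
  then have "((M + 2) * (x1 * x2)) * ((M + 3) * x0 * x3) \<le> ((M + 2) * (x1 * x2)) * ((M + 1) * x1 * x2)"
    by (simp add: algebra_simps power2_eq_square)
  then show ?thesis
    using pos by (simp add: mult_le_cancel_left_pos)
qed (simp add: assms)

lemma newton_ineq_mult_linear:
  fixes M x0 x1 x2 x3 y :: real
  assumes "0 \<le> M" "0 \<le> x0" "0 \<le> x1" "0 \<le> x2" "0 \<le> x3" "0 \<le> y"
    and "(M + 2) * x0 * x2 \<le> (M + 1) * x1\<^sup>2" "(M + 3) * x1 * x3 \<le> (M + 2) * x2\<^sup>2"
    and "x1 = 0 \<Longrightarrow> x2 = 0" "x2 = 0 \<Longrightarrow> x3 = 0"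
  shows "(M + 3) * (x1 + y * x0) * (x3 + y * x2) \<le> (M + 2) * (x2 + y * x1)\<^sup>2"
proof -
  have "(M + 3) * x0 * x3 \<le> (M + 1) * x1 * x2"
    using assms by (intro newton_ineq_chain) auto
  moreover have "(M + 3) * x0 * x2 \<le> (M + 2) * x1\<^sup>2"
    using assms by (intro newton_ineq_weaken) auto
  ultimately have "0 \<le> ((M + 2) * x2\<^sup>2 - (M + 3) * x1 * x3)
      + y * ((M + 1) * x1 * x2 - (M + 3) * x0 * x3) + y\<^sup>2 * ((M + 2) * x1\<^sup>2 - (M + 3) * x0 * x2)"
    using assms by simp
  then show ?thesis
    by (simp add: algebra_simps power2_eq_square)
qed

text \<open>\<open>b\<close> is the coefficient sequence of \<open>1 + y t\<close> times the generating polynomial of \<open>a\<close>.\<close>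
lemma ultra_log_concave_mult_linear:
  assumes ulc: "ultra_log_concave a" and y: "0 \<le> y"
    and b0: "b 0 = a 0" and bSuc: "\<And>j. b (Suc j) = a (Suc j) + y * a j"
  shows "ultra_log_concave b"
proof -
  have pos: "\<And>i. 0 \<le> a i" and zero: "\<And>i. a i = 0 \<Longrightarrow> a (Suc i) = 0"
    and newton: "\<And>i. real (i + 2) * a i * a (i + 2) \<le> real (i + 1) * (a (i + 1))\<^sup>2"
    using ulc unfolding ultra_log_concave_def by auto
  have "0 \<le> b i" for i
    using pos y by (cases i) (auto simp: b0 bSuc)
  moreover have "b (Suc i) = 0" if "b i = 0" for i
  proof (cases i)
    case 0
    then show ?thesis
      using that zero by (simp add: b0 bSuc)
  next
    case (Suc j)
    then have "a (Suc j) = 0 \<and> y * a j = 0"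
      using that pos[of "Suc j"] y pos[of j] by (simp add: bSuc add_nonneg_eq_0_iff)
    then show ?thesis
      using Suc zero by (simp add: bSuc)
  qed
  moreover have "real (i + 2) * b i * b (i + 2) \<le> real (i + 1) * (b (i + 1))\<^sup>2" for i
  proof (cases i)
    case 0
    have "2 * a 0 * a (Suc (Suc 0)) \<le> (a (Suc 0))\<^sup>2"
      using newton[of 0] by (simp add: numeral_2_eq_2)
    moreover have "0 \<le> y\<^sup>2 * (a 0)\<^sup>2"
      by simp
    ultimately show ?thesis
      using 0 by (simp add: b0 bSuc numeral_2_eq_2 power2_eq_square algebra_simps)
  next
    case (Suc m)
    show ?thesis
      using newton_ineq_mult_linear[of "real m" "a m" "a (m + 1)" "a (m + 2)" "a (m + 3)" y]
        newton[of m] newton[of "m + 1"] zero[of "m + 1"] zero[of "m + 2"] pos y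
      by (simp add: Suc bSuc numeral_2_eq_2 numeral_3_eq_3 algebra_simps)
  qed
  ultimately show ?thesis
    unfolding ultra_log_concave_def by blast
qed

definition esym :: "('a \<Rightarrow> real) \<Rightarrow> 'a set \<Rightarrow> nat \<Rightarrow> real" where
  "esym l I j = (\<Sum>B | B \<subseteq> I \<and> card B = j. \<Prod>i\<in>B. l i)"

lemma esym_empty: "esym l {} j = (if j = 0 then 1 else 0)"
proof -
  have empty: "{B. B \<subseteq> {} \<and> card B = j} = (if j = 0 then {{}} else {})"
    by auto
  show ?thesis
    unfolding esym_def by (subst empty) simp
qed

lemma esym_0:
  assumes "finite I"
  shows "esym l I 0 = 1"
proof -
  have "{B. B \<subseteq> I \<and> card B = 0} = {{}}"
    using assms by (auto dest: finite_subset)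
  then show ?thesis
    unfolding esym_def by simp
qed

lemma esym_insert:
  assumes I: "finite I" and y: "y \<notin> I"
  shows "esym l (insert y I) (Suc j) = esym l I (Suc j) + l y * esym l I j"
proof -
  let ?A = "{B. B \<subseteq> I \<and> card B = Suc j}"
  let ?C = "{B. B \<subseteq> I \<and> card B = j}"
  have fin_sub: "finite C \<and> y \<notin> C" if "C \<subseteq> I" for C
    using that I y finite_subset by blast
  have fin: "finite ?A" "finite ?C"
    using I by (auto intro: finite_subset[of _ "Pow I"])
  have "{B. B \<subseteq> insert y I \<and> card B = Suc j} = ?A \<union> insert y ` ?C"
  proof (intro equalityI subsetI)
    fix B assume B: "B \<in> {B. B \<subseteq> insert y I \<and> card B = Suc j}"
    show "B \<in> ?A \<union> insert y ` ?C"
    proof (cases "y \<in> B")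
      case True
      then have "B = insert y (B - {y})" "B - {y} \<in> ?C"
        using B I by (auto intro: finite_subset[of B "insert y I"])
      then show ?thesis by blast
    qed (use B in auto)
  next
    fix B assume "B \<in> ?A \<union> insert y ` ?C"
    then show "B \<in> {B. B \<subseteq> insert y I \<and> card B = Suc j}"
      using y fin_sub by auto
  qed
  moreover have "?A \<inter> insert y ` ?C = {}"
    using y by auto
  moreover have "inj_on (insert y) ?C"
    using y by (auto intro!: inj_onI)
  moreover have "(\<Prod>i\<in>insert y C. l i) = l y * (\<Prod>i\<in>C. l i)" if "C \<in> ?C" for C
    using that y fin_sub by auto
  ultimately show ?thesis
    unfolding esym_def using fin
    by (simp add: sum.union_disjoint sum.reindex sum_distrib_left)
qed

lemma esym_ultra_log_concave:
  assumes "finite I" "\<And>i. 0 \<le> l i"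
  shows "ultra_log_concave (esym l I)"
  using assms(1)
proof (induction I rule: finite_induct)
  case empty
  show ?case
    unfolding ultra_log_concave_def esym_empty by auto
next
  case (insert y I)
  show ?case
    by (rule ultra_log_concave_mult_linear[OF insert.IH assms(2)[of y]])
      (simp_all add: esym_0 esym_insert insert.hyps)
qed

lemma ultra_log_concave_ratio_antimono:
  assumes ulc: "ultra_log_concave a" and "j \<le> k"
  shows "real (Suc k) * a (Suc k) * a j \<le> real (Suc j) * a (Suc j) * a k"
  using assms(2)
proof (induction k rule: dec_induct)
  case (step k)
  have pos: "\<And>i. 0 \<le> a i" and zero: "\<And>i. a i = 0 \<Longrightarrow> a (Suc i) = 0"
    and newton: "real (k + 2) * a k * a (k + 2) \<le> real (k + 1) * (a (k + 1))\<^sup>2"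
    using ulc unfolding ultra_log_concave_def by auto
  let ?F = "real (Suc j) * a (Suc j)"
  show ?case
  proof (cases "a k = 0")
    case True
    then show ?thesis
      using zero by simp
  next
    case False
    then have ak: "0 < a k"
      using pos[of k] by simp
    have "a k * (real (Suc (Suc k)) * a (Suc (Suc k)) * a j)
        = (real (k + 2) * a k * a (k + 2)) * a j"
      by (simp add: algebra_simps)
    also have "\<dots> \<le> (real (k + 1) * (a (k + 1))\<^sup>2) * a j"
      using newton pos[of j] by (rule mult_right_mono)
    also have "\<dots> = (real (Suc k) * a (Suc k) * a j) * a (Suc k)"
      by (simp add: power2_eq_square algebra_simps)
    also have "\<dots> \<le> (?F * a k) * a (Suc k)"
      using step.IH pos[of "Suc k"] by (rule mult_right_mono)
    also have "\<dots> = a k * (?F * a (Suc k))"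
      by (simp add: algebra_simps)
    finally show ?thesis
      using ak by (simp add: mult_le_cancel_left_pos)
  qed
qed simp

lemma weighted_sum_pos:
  fixes e :: "nat \<Rightarrow> real"
  assumes "\<And>j. 0 \<le> e j" "0 < e 0" "0 \<le> c"
  shows "0 < (\<Sum>j\<le>k. c ^ j * e j)"
proof -
  have "(\<Sum>j\<le>k. c ^ j * e j) = e 0 + (\<Sum>j\<in>{1..k}. c ^ j * e j)"
    by (simp add: atMost_atLeast0 sum.atLeast_Suc_atMost)
  moreover have "0 \<le> (\<Sum>j\<in>{1..k}. c ^ j * e j)"
    using assms by (intro sum_nonneg) simp
  ultimately show ?thesis
    using assms(2) by simp
qed

text \<open>The left-hand side is the last of the ratios \<open>(j + 1) e\<^sub>j\<^sub>+\<^sub>1 / e\<^sub>j\<close>, which decrease in \<open>j\<close>;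
  the right-hand side is a weighted mean of all of them.\<close>
lemma ultra_log_concave_ratio_le_weighted:
  assumes ulc: "ultra_log_concave e" and "0 < e 0" "0 \<le> c"
  shows "real (Suc k) * e (Suc k) / e k
       \<le> (\<Sum>j\<le>k. c ^ j * (real (Suc j) * e (Suc j))) / (\<Sum>j\<le>k. c ^ j * e j)"
proof -
  have pos: "\<And>j. 0 \<le> e j"
    using ulc by (simp add: ultra_log_concave_def)
  define N where "N = (\<Sum>j\<le>k. c ^ j * (real (Suc j) * e (Suc j)))"
  define D where "D = (\<Sum>j\<le>k. c ^ j * e j)"
  have D: "0 < D"
    unfolding D_def using pos assms(2,3) by (rule weighted_sum_pos)
  have N: "0 \<le> N"
    unfolding N_def using pos assms(3) by (intro sum_nonneg) simp
  show ?thesis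
  proof (cases "e k = 0")
    case False
    then have ek: "0 < e k"
      using pos[of k] by simp
    have "real (Suc k) * e (Suc k) * D = (\<Sum>j\<le>k. c ^ j * (real (Suc k) * e (Suc k) * e j))"
      unfolding D_def by (simp add: sum_distrib_left algebra_simps)
    also have "\<dots> \<le> (\<Sum>j\<le>k. c ^ j * (real (Suc j) * e (Suc j) * e k))"
      using ultra_log_concave_ratio_antimono[OF ulc] assms(3)
      by (intro sum_mono mult_left_mono) auto
    also have "\<dots> = N * e k"
      unfolding N_def by (simp add: sum_distrib_right mult.assoc)
    finally show ?thesis
      using ek D by (simp add: N_def D_def divide_le_eq le_divide_eq mult.commute)
  qed (use N D in \<open>simp add: N_def D_def\<close>)
qed

section \<open>Spectral decomposition of symmetric matrices\<close>

lemma symmetric_matrix_inner: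
  fixes K :: "real^'n^'n"
  assumes "transpose K = K"
  shows "x \<bullet> (K *v y) = (K *v x) \<bullet> y"
  by (metis assms dot_lmul_matrix inner_commute transpose_matrix_vector)

lemma quadratic_nonpos_imp_linear_coeff_zero:
  fixes a c :: real
  assumes "\<And>t. t * a + t\<^sup>2 * c \<le> 0"
  shows "a = 0"
proof -
  define t where "t = a / (\<bar>c\<bar> + 1)"
  have "t * (\<bar>c\<bar> + 1) = a"
    by (simp add: t_def add_pos_nonneg)
  moreover have "(t * a + t\<^sup>2 * c) * (\<bar>c\<bar> + 1)\<^sup>2
      = (t * (\<bar>c\<bar> + 1)) * a * (\<bar>c\<bar> + 1) + (t * (\<bar>c\<bar> + 1))\<^sup>2 * c"
    by (simp add: algebra_simps power2_eq_square)
  ultimately have "(t * a + t\<^sup>2 * c) * (\<bar>c\<bar> + 1)\<^sup>2 = a\<^sup>2 * (\<bar>c\<bar> + 1 + c)"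
    by (simp add: algebra_simps power2_eq_square)
  moreover have "(t * a + t\<^sup>2 * c) * (\<bar>c\<bar> + 1)\<^sup>2 \<le> 0"
    using assms[of t] by (simp add: mult_nonpos_nonneg)
  ultimately have "a\<^sup>2 * (\<bar>c\<bar> + 1 + c) \<le> 0"
    by simp
  moreover have "\<bar>c\<bar> + 1 + c > 0" by linarith
  ultimately show ?thesis
    by (simp add: mult_le_0_iff)
qed

lemma quadratic_form_max_on_sphere:
  fixes K :: "real^'n^'n"
  assumes V: "subspace V" "V \<noteq> {0}"
  obtains v where "v \<in> V" "norm v = 1"
    "\<And>x. x \<in> V \<Longrightarrow> x \<bullet> (K *v x) \<le> (v \<bullet> (K *v v)) * (x \<bullet> x)"
proof -
  define q where "q x = x \<bullet> (K *v x)" for x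
  define S where "S = V \<inter> sphere 0 1"
  obtain x0 where x0: "x0 \<in> V" "x0 \<noteq> 0"
    using V subspace_0 by blast
  have "(1 / norm x0) *\<^sub>R x0 \<in> S"
    using x0 V unfolding S_def by (auto simp: subspace_scale)
  moreover have "compact S"
    unfolding S_def by (metis Int_commute compact_Int_closed compact_sphere closed_subspace V(1))
  moreover have "continuous_on S q"
    unfolding q_def by (intro continuous_intros)
  ultimately obtain v where v: "v \<in> S" and vmax: "\<And>y. y \<in> S \<Longrightarrow> q y \<le> q v"
    using continuous_attains_sup[of S q] by blast
  have "q x \<le> q v * (x \<bullet> x)" if "x \<in> V" for x
  proof (cases "x = 0")
    case False
    define u where "u = (1 / norm x) *\<^sub>R x"
    have "u \<in> S"
      using False that V unfolding S_def u_def by (auto simp: subspace_scale)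
    moreover have "q x = (norm x)\<^sup>2 * q u"
      using False by (simp add: q_def u_def matrix_vector_mult_scaleR power2_eq_square)
    ultimately show ?thesis
      using vmax mult_right_mono[of "q u" "q v" "(norm x)\<^sup>2"] by (simp add: dot_square_norm mult.commute)
  qed (simp add: q_def)
  then show ?thesis
    using that v unfolding S_def q_def by auto
qed

text \<open>Perturbing the maximiser \<open>v\<close> in the direction \<open>w = K v - \<lambda> v\<close> would increase the Rayleigh
  quotient to first order unless \<open>w = 0\<close>.\<close>
lemma symmetric_matrix_max_quadratic_form_eigenvector:
  fixes K :: "real^'n^'n"
  assumes sym: "transpose K = K" and V: "subspace V" and inv: "\<And>x. x \<in> V \<Longrightarrow> K *v x \<in> V"
    and vV: "v \<in> V" and vv: "v \<bullet> v = 1"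
    and max: "\<And>x. x \<in> V \<Longrightarrow> x \<bullet> (K *v x) \<le> (v \<bullet> (K *v v)) * (x \<bullet> x)"
  shows "K *v v = (v \<bullet> (K *v v)) *\<^sub>R v"
proof -
  define l where "l = v \<bullet> (K *v v)"
  define w where "w = K *v v - l *\<^sub>R v"
  have wV: "w \<in> V"
    unfolding w_def using inv vV V by (simp add: subspace_diff subspace_scale)
  have "t * (2 * (w \<bullet> w)) + t\<^sup>2 * (w \<bullet> (K *v w) - l * (w \<bullet> w)) \<le> 0" for t
  proof -
    have "v + t *\<^sub>R w \<in> V"
      using vV wV V by (simp add: subspace_add subspace_scale)
    then have "(v + t *\<^sub>R w) \<bullet> (K *v (v + t *\<^sub>R w)) \<le> l * ((v + t *\<^sub>R w) \<bullet> (v + t *\<^sub>R w))"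
      unfolding l_def by (rule max)
    moreover have "(K *v v) \<bullet> w = w \<bullet> w + l * (v \<bullet> w)"
      unfolding w_def by (simp add: inner_diff_left inner_diff_right inner_commute algebra_simps)
    ultimately show ?thesis
      using symmetric_matrix_inner[OF sym, of v w] vv
      unfolding l_def
      by (simp add: matrix_vector_right_distrib matrix_vector_mult_scaleR inner_add_left
          inner_add_right power2_eq_square algebra_simps inner_commute)
  qed
  then have "2 * (w \<bullet> w) = 0"
    by (rule quadratic_nonpos_imp_linear_coeff_zero)
  then show ?thesis
    by (simp add: w_def l_def)
qed

lemma symmetric_matrix_orthonormal_eigenvectors:
  fixes K :: "real^'n^'n"
  assumes sym: "transpose K = K"
  shows "subspace V \<Longrightarrow> (\<And>x. x \<in> V \<Longrightarrow> K *v x \<in> V) \<Longrightarrow>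
    \<exists>B\<subseteq>V. finite B \<and> card B = dim V \<and> pairwise orthogonal B \<and>
      (\<forall>x\<in>B. norm x = 1 \<and> (\<exists>l. K *v x = l *\<^sub>R x))"
proof (induction "dim V" arbitrary: V)
  case 0
  then show ?case by (intro exI[of _ "{}"]) auto
next
  case (Suc d V)
  have "V \<noteq> {0}"
    using Suc.hyps(2) by auto
  then obtain v where vV: "v \<in> V" and nv: "norm v = 1"
    and max: "\<And>x. x \<in> V \<Longrightarrow> x \<bullet> (K *v x) \<le> (v \<bullet> (K *v v)) * (x \<bullet> x)"
    using quadratic_form_max_on_sphere[OF Suc.prems(1)] by blast
  define l where "l = v \<bullet> (K *v v)"
  have vv: "v \<bullet> v = 1"
    using nv by (simp add: dot_square_norm)
  have ev: "K *v v = l *\<^sub>R v"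
    unfolding l_def by (rule symmetric_matrix_max_quadratic_form_eigenvector[OF sym Suc.prems vV vv max])
  define V' where "V' = {y \<in> V. \<forall>x\<in>span {v}. orthogonal x y}"
  have memV': "y \<in> V' \<longleftrightarrow> y \<in> V \<and> v \<bullet> y = 0" for y
    unfolding V'_def orthogonal_def span_singleton by auto
  have "span {v} \<subseteq> V"
    using vV Suc.prems(1) by (intro span_minimal) auto
  then have "dim V' + dim (span {v}) = dim V"
    unfolding V'_def by (rule dim_subspace_orthogonal_to_vectors[OF subspace_span Suc.prems(1)])
  moreover have "v \<noteq> 0"
    using nv by auto
  ultimately have "d = dim V'"
    using Suc.hyps(2) by (simp add: dim_span dim_singleton)
  moreover have "subspace V'"
    using Suc.prems(1) unfolding subspace_def by (auto simp: memV' inner_add_right)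
  moreover have "K *v x \<in> V'" if "x \<in> V'" for x
  proof -
    have "v \<bullet> (K *v x) = (K *v v) \<bullet> x"
      by (rule symmetric_matrix_inner[OF sym])
    then show ?thesis
      using that Suc.prems(2) ev by (auto simp: memV')
  qed
  ultimately obtain B where B: "B \<subseteq> V'" "finite B" "card B = d" "pairwise orthogonal B"
      "\<forall>x\<in>B. norm x = 1 \<and> (\<exists>l. K *v x = l *\<^sub>R x)"
    using Suc.hyps(1) by blast
  have "v \<notin> B"
    using B(1) nv memV' by fastforce
  moreover have "orthogonal v y \<and> orthogonal y v" if "y \<in> B" for y
    using that B(1) memV' by (auto simp: orthogonal_def inner_commute)
  ultimately show ?case
    using B vV nv ev Suc.hyps(2) memV'
    by (intro exI[of _ "insert v B"]) (auto simp: pairwise_insert)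
qed

lemma symmetric_matrix_diagonalizable:
  fixes K :: "real^'n^'n"
  assumes "transpose K = K"
  obtains Q l where "orthogonal_matrix Q" "\<And>i. K *v column i Q = l i *\<^sub>R column i Q"
proof -
  obtain B where B: "finite B" "card B = CARD('n)" "pairwise orthogonal B"
    "\<forall>x\<in>B. norm x = 1 \<and> (\<exists>l. K *v x = l *\<^sub>R x)"
    using symmetric_matrix_orthonormal_eigenvectors[OF assms subspace_UNIV] by auto
  obtain f where f: "bij_betw f (UNIV::'n set) B"
    using finite_same_card_bij[of "UNIV::'n set" B] B(1,2) by auto
  define Q :: "real^'n^'n" where "Q = (\<chi> a b. f b $ a)"
  have col: "column i Q = f i" for i
    by (simp add: Q_def column_def vec_eq_iff)
  have fB: "f i \<in> B" for i
    using f by (auto simp: bij_betw_def)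
  have "orthogonal_matrix Q"
    unfolding orthogonal_matrix_orthonormal_columns col
    using B(3,4) fB f by (auto simp: pairwise_def bij_betw_def inj_on_def) blast
  moreover have "\<exists>l. K *v column i Q = l *\<^sub>R column i Q" for i
    using B(4) fB by (simp add: col)
  ultimately show ?thesis
    using that by metis
qed

definition diag_mat :: "('n \<Rightarrow> real) \<Rightarrow> real^'n^'n" where
  "diag_mat l = (\<chi> a b. if a = b then l a else 0)"

lemma matrix_mul_eigencolumns:
  assumes "\<And>i. K *v column i Q = l i *\<^sub>R column i Q"
  shows "K ** Q = Q ** diag_mat l"
proof -
  have "(K ** Q) $ a $ b = (Q ** diag_mat l) $ a $ b" for a b
  proof -
    have "(K ** Q) $ a $ b = (K *v column b Q) $ a"
      by (simp add: matrix_matrix_mult_def matrix_vector_mult_def column_def)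
    also have "\<dots> = l b * Q $ a $ b"
      unfolding assms by (simp add: column_def)
    also have "\<dots> = (Q ** diag_mat l) $ a $ b"
      by (simp add: matrix_matrix_mult_def diag_mat_def if_distrib cong: if_cong)
    finally show ?thesis .
  qed
  then show ?thesis
    by (simp add: vec_eq_iff)
qed

lemma det_identity_add_orthogonal_similar:
  fixes K D :: "real^'n^'n"
  assumes "orthogonal_matrix Q" "K ** Q = Q ** D"
  shows "det (mat 1 + K) = det (mat 1 + D)"
proof -
  have "(mat 1 + K) ** Q = mat 1 ** Q + K ** Q"
    by (simp add: vec_eq_iff matrix_matrix_mult_def distrib_right sum.distrib)
  also have "\<dots> = Q ** (mat 1 + D)"
    by (simp add: assms(2) matrix_add_ldistrib)
  finally have "(mat 1 + K) ** Q = Q ** (mat 1 + D)" .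
  then have "det (mat 1 + K) * det Q = det Q * det (mat 1 + D)"
    by (metis det_mul)
  moreover have "det Q \<noteq> 0"
    using det_orthogonal_matrix[OF assms(1)] by auto
  ultimately show ?thesis
    by simp
qed

lemma pdet_diag_mat: "pdet (diag_mat l) T = (\<Prod>i\<in>T. l i)"
proof -
  have "det (pad_principal (diag_mat l) T) = (\<Prod>i\<in>UNIV. if i \<in> T then l i else 1)"
    by (subst det_diagonal) (auto simp: pad_principal_def diag_mat_def intro!: prod.cong)
  then show ?thesis
    by (simp add: det_pad_principal prod.If_cases Int_absorb1)
qed

lemma principal_minor_sum_orthogonal_similar_diag:
  fixes K :: "real^'n^'n"
  assumes "orthogonal_matrix Q" "K ** Q = Q ** diag_mat l"
  shows "principal_minor_sum K j = esym l UNIV j"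
proof (cases "j \<le> CARD('n)")
  case True
  have "(\<Sum>i\<le>CARD('n). principal_minor_sum K i * t ^ i)
      = (\<Sum>i\<le>CARD('n). principal_minor_sum (diag_mat l) i * t ^ i)" for t
  proof -
    have "t *\<^sub>R K ** Q = t *\<^sub>R (Q ** diag_mat l)"
      by (simp only: assms(2) scalar_matrix_assoc[symmetric])
    also have "\<dots> = Q ** (t *\<^sub>R diag_mat l)"
      by (simp only: matrix_scalar_ac scalar_matrix_assoc)
    finally have "det (mat 1 + t *\<^sub>R K) = det (mat 1 + t *\<^sub>R diag_mat l)"
      by (rule det_identity_add_orthogonal_similar[OF assms(1)])
    then show ?thesis
      by (simp add: det_identity_add_scaleR mult.commute)
  qed
  then have "principal_minor_sum K j = principal_minor_sum (diag_mat l) j"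
    using True polyfun_eq_coeffs by blast
  then show ?thesis
    by (simp add: principal_minor_sum_def esym_def pdet_diag_mat)
next
  case False
  then have "card T \<noteq> j" for T :: "'n set"
    using card_mono[of UNIV T] by auto
  then show ?thesis
    by (simp add: principal_minor_sum_def esym_def)
qed

lemma gram_principal_minor_sum_ultra_log_concave:
  fixes A :: "real^'n^'m"
  shows "ultra_log_concave (principal_minor_sum (transpose A ** A))"
proof -
  let ?K = "transpose A ** A"
  obtain Q l where Q: "orthogonal_matrix Q" and ev: "\<And>i. ?K *v column i Q = l i *\<^sub>R column i Q"
    using symmetric_matrix_diagonalizable[of ?K] by (auto simp: matrix_transpose_mul)
  have "l i = (A *v column i Q) \<bullet> (A *v column i Q)" for i
  proof -
    have "l i = column i Q \<bullet> (?K *v column i Q)"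
      using Q by (simp add: ev orthogonal_matrix_orthonormal_columns norm_eq_1)
    then show ?thesis
      by (metis dot_lmul_matrix inner_commute matrix_vector_mul_assoc transpose_matrix_vector)
  qed
  then have "ultra_log_concave (esym l UNIV)"
    by (intro esym_ultra_log_concave) auto
  moreover have "principal_minor_sum ?K = esym l UNIV"
    using principal_minor_sum_orthogonal_similar_diag[OF Q matrix_mul_eigencolumns[OF ev]] by (rule ext)
  ultimately show ?thesis
    by simp
qed

section \<open>Expectations under DPPs\<close>

lemma kdpp_expect_eq:
  "kdpp_expect k K f = (\<Sum>S | card S = k. pdet K S * f S) / principal_minor_sum K k"
  unfolding kdpp_expect_def kdpp_prob_def principal_minor_sum_def
  by (simp add: sum_divide_distrib)

lemma sum_card_le_dpp_prob_scaleR: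
  "(\<Sum>S | card S \<le> k. dpp_prob (c *\<^sub>R K) S * f S)
     = (\<Sum>j\<le>k. c ^ j * (\<Sum>S | card S = j. pdet K S * f S)) / det (mat 1 + c *\<^sub>R K)"
proof -
  have "(\<Sum>S | card S \<le> k. dpp_prob (c *\<^sub>R K) S * f S)
      = (\<Sum>S | card S \<le> k. c ^ card S * (pdet K S * f S)) / det (mat 1 + c *\<^sub>R K)"
    by (simp add: dpp_prob_def pdet_scaleR sum_divide_distrib mult.assoc)
  then show ?thesis
    using sum_card_le_group[of "\<lambda>j. c ^ j" "\<lambda>S. pdet K S * f S" k] by simp
qed

lemma dpp_cond_expect_le_scaleR:
  assumes "det (mat 1 + c *\<^sub>R K) \<noteq> 0"
  shows "dpp_cond_expect_le k (c *\<^sub>R K) f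
       = (\<Sum>j\<le>k. c ^ j * (\<Sum>S | card S = j. pdet K S * f S))
         / (\<Sum>j\<le>k. c ^ j * principal_minor_sum K j)"
proof -
  have "(\<Sum>S | card S \<le> k. dpp_prob (c *\<^sub>R K) S)
      = (\<Sum>j\<le>k. c ^ j * principal_minor_sum K j) / det (mat 1 + c *\<^sub>R K)"
    using sum_card_le_dpp_prob_scaleR[where f = "\<lambda>_. 1"] by (simp add: principal_minor_sum_def)
  then show ?thesis
    using assms by (simp add: dpp_cond_expect_le_def sum_card_le_dpp_prob_scaleR)
qed

theorem lemma3:
  fixes A :: "real^'n^'m" and k :: nat and \<alpha> :: real
  assumes "1 \<le> k" and "k \<le> CARD('n)" and "\<alpha> > 0"
  shows "kdpp_expect k (transpose A ** A) (Er A)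
           \<le> dpp_cond_expect_le k ((1 / \<alpha>) *\<^sub>R (transpose A ** A)) (Er A)"
proof -
  let ?K = "transpose A ** A"
  let ?e = "principal_minor_sum ?K"
  have ulc: "ultra_log_concave ?e"
    by (rule gram_principal_minor_sum_ultra_log_concave)
  have e0: "0 < ?e 0"
    by (simp add: principal_minor_sum_def pdet_empty)
  have "0 < (\<Sum>j\<le>CARD('n). (1 / \<alpha>) ^ j * ?e j)"
    using ulc e0 assms(3) by (intro weighted_sum_pos) (auto simp: ultra_log_concave_def)
  then have det: "det (mat 1 + (1 / \<alpha>) *\<^sub>R ?K) \<noteq> 0"
    by (simp add: det_identity_add_scaleR)
  have "kdpp_expect k ?K (Er A) = real (Suc k) * ?e (Suc k) / ?e k"
    by (simp add: kdpp_expect_eq sum_pdet_gram_Er)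
  also have "\<dots> \<le> (\<Sum>j\<le>k. (1 / \<alpha>) ^ j * (real (Suc j) * ?e (Suc j))) / (\<Sum>j\<le>k. (1 / \<alpha>) ^ j * ?e j)"
    using ulc e0 assms(3) by (intro ultra_log_concave_ratio_le_weighted) auto
  also have "\<dots> = dpp_cond_expect_le k ((1 / \<alpha>) *\<^sub>R ?K) (Er A)"
    by (simp add: dpp_cond_expect_le_scaleR[OF det] sum_pdet_gram_Er)
  finally show ?thesis .
qed

end
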